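(* Let $\alpha>0$, $\varepsilon>0$, and let $S_2$ be the feasible set produced by Phase B (after Phase A), before removing $S_2\cap D$. Then \[ \mathbb E[w(S_2\setminus D)]\ \ge\ (1-(1+1/\alpha)\varepsilon)\,\mathbb E[w(S_2)], \] where the expectation is over the random sampling in Phase A.
   Context: Setting. $V$ is a finite ground set of $n=|V|$ items arriving one at a time in a fixed stream order. $f:2^V\to\mathbb R_{\ge 0}$ is non-decreasing and submodular with $f(\emptyset)=0$; write $f(v\mid X)=f(X\cup\{v\})-f(X)$. $\mathcal M=\mathcal M_1\cap\dots\cap\mathcal M_p$ is the intersection of $p$ matroids $\mathcal M_1,\dots,\mathcal M_p$ on $V$ (a "$p$-matroid"); a set is feasible if it lies in $\mathcal M$; the rank is $r=\max_{S\in\mathcal M}|S|$. $d\ge 0$ is an integer and $D\subseteq V$ is a deletion set with $|D|\le d$, fixed in advance and independent of the algorithm's random bits (static adversary). Weights. Items receive a weight $w(v)\ge 0$ when processed, as specified below; for a set $S$, $w(S)=\sum_{u\in S}w(u)$ (with $w(\emptyset)=0$). Exchange$(v,I)$: for each $j\in[p]$ with $I\cup\{v\}\notin\mathcal M_j$, let $u_j\in\arg\min\{w(u): u\in I,\ (I\cup\{v\})\setminus\{u\}\in\mathcal M_j\}$; return the set $\{u_j\}$ of these items (empty if $I\cup\{v\}\in\mathcal M$). Phase A (streaming, parameters $\varepsilon,\alpha>0$): initialize $I=\emptyset$, $C=\emptyset$. For each arriving item $v'$ of $V$ in stream order: (1) $C\gets C\cup\{v'\}$; (2) $C\gets\{v\in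 C: f(v\mid I)\ge (1+\alpha)\,w(\mathrm{Exchange}(v,I))\}$; (3) if $|C|\ge d/\varepsilon$, sample one item $v\in C$ at random with probability proportional to $1/f(v\mid I)$, set $w(v)=f(v\mid I)$, and set $I\gets (I\cup\{v\})\setminus \mathrm{Exchange}(v,I)$. At the end output $S_1:=I$ and the buffer $C$. The coreset is $R=S_1\cup C$. Phase B (after deletions, parameter $\alpha$): start with $I=S_1$. For each $v\in C\setminus D$: set $w(v)=f(v\mid I)$, $S=\mathrm{Exchange}(v,I)$, and if $w(v)\ge(1+\alpha)w(S)$ set $I\gets(I\cup\{v\})\setminus S$. Let $S_2$ be the final $I$; output $\mathrm{ALG}=S_2\setminus D$. *)

theory Defs
  imports "HOL-Probability.Probability"
begin

definition marg :: "('a set \<Rightarrow> real) \<Rightarrow> 'a \<Rightarrow> 'a set \<Rightarrow> real" where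
  "marg f v X = f (insert v X) - f X"

definition monotone_set_fun :: "'a set \<Rightarrow> ('a set \<Rightarrow> real) \<Rightarrow> bool" where
  "monotone_set_fun V f \<longleftrightarrow> (\<forall>A B. A \<subseteq> B \<and> B \<subseteq> V \<longrightarrow> f A \<le> f B)"

definition submodular :: "'a set \<Rightarrow> ('a set \<Rightarrow> real) \<Rightarrow> bool" where
  "submodular V f \<longleftrightarrow> (\<forall>A B v. A \<subseteq> B \<and> B \<subseteq> V \<and> v \<in> V - B \<longrightarrow> marg f v B \<le> marg f v A)"

definition matroid :: "'a set \<Rightarrow> ('a set \<Rightarrow> bool) \<Rightarrow> bool" where
  "matroid E ind \<longleftrightarrow> finite E \<and> ind {} \<and> (\<forall>A. ind A \<longrightarrow> A \<subseteq> E)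
     \<and> (\<forall>A B. ind B \<and> A \<subseteq> B \<longrightarrow> ind A)
     \<and> (\<forall>A B. ind A \<and> ind B \<and> card A < card B \<longrightarrow> (\<exists>x\<in>B - A. ind (insert x A)))"

definition exch_cands :: "(nat \<Rightarrow> 'a set \<Rightarrow> bool) \<Rightarrow> nat \<Rightarrow> ('a \<Rightarrow> real) \<Rightarrow> 'a \<Rightarrow> 'a set \<Rightarrow> 'a set" where
  "exch_cands Ms j w v I = {u \<in> I. Ms j (insert v I - {u}) \<and>
      (\<forall>u'\<in>I. Ms j (insert v I - {u'}) \<longrightarrow> w u \<le> w u')}"

text \<open>The result is \<open>None\<close> iff for some violated matroid no valid exchange candidate exists
  (i.e. v can never be made feasible); such an item is never taken.\<close>
definition Exchange :: "nat \<Rightarrow> (nat \<Rightarrow> 'a set \<Rightarrow> bool) \<Rightarrow> ('a set \<Rightarrow> 'a) \<Rightarrow> ('a \<Rightarrow> real)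
    \<Rightarrow> 'a \<Rightarrow> 'a set \<Rightarrow> 'a set option" where
  "Exchange p Ms sel w v I =
     (let J = {j. j < p \<and> \<not> Ms j (insert v I)} in
      if \<exists>j\<in>J. exch_cands Ms j w v I = {} then None
      else Some ((\<lambda>j. sel (exch_cands Ms j w v I)) ` J))"

definition keep :: "('a set \<Rightarrow> real) \<Rightarrow> nat \<Rightarrow> (nat \<Rightarrow> 'a set \<Rightarrow> bool) \<Rightarrow> ('a set \<Rightarrow> 'a)
    \<Rightarrow> real \<Rightarrow> ('a \<Rightarrow> real) \<Rightarrow> 'a set \<Rightarrow> 'a \<Rightarrow> bool" where
  "keep f p Ms sel \<alpha> w I v = (case Exchange p Ms sel w v I of
       None \<Rightarrow> False
     | Some S \<Rightarrow> marg f v I \<ge> (1 + \<alpha>) * sum w S)"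

text \<open>If some items have
  \<open>g v = 0\<close> (weight \<open>1/0 = \<infinity>\<close>), sample uniformly among those (limit semantics).\<close>
definition sample_pmf :: "('a \<Rightarrow> real) \<Rightarrow> 'a set \<Rightarrow> 'a pmf" where
  "sample_pmf g C = (let Z = {v \<in> C. g v = 0} in
     if Z \<noteq> {} then pmf_of_set Z
     else embed_pmf (\<lambda>v. if v \<in> C then (1 / g v) / (\<Sum>u\<in>C. 1 / g u) else 0))"

type_synonym 'a stateA = "'a set \<times> 'a set \<times> ('a \<Rightarrow> real)"

definition phaseA_step :: "('a set \<Rightarrow> real) \<Rightarrow> nat \<Rightarrow> (nat \<Rightarrow> 'a set \<Rightarrow> bool) \<Rightarrow> ('a set \<Rightarrow> 'a)
    \<Rightarrow> real \<Rightarrow> real \<Rightarrow> nat \<Rightarrow> 'a \<Rightarrow> 'a stateA \<Rightarrow> 'a stateA pmf" where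
  "phaseA_step f p Ms sel \<alpha> \<epsilon> d v' st = (case st of (I, C, w) \<Rightarrow>
     (let C1 = insert v' C;
          C2 = {v \<in> C1. keep f p Ms sel \<alpha> w I v}
      in if C2 \<noteq> {} \<and> real (card C2) \<ge> real d / \<epsilon> then
           map_pmf (\<lambda>v. ((I \<union> {v}) - the (Exchange p Ms sel w v I), C2 - {v}, w(v := marg f v I)))
                   (sample_pmf (\<lambda>v. marg f v I) C2)
         else return_pmf (I, C2, w)))"

fun phaseA_run :: "('a set \<Rightarrow> real) \<Rightarrow> nat \<Rightarrow> (nat \<Rightarrow> 'a set \<Rightarrow> bool) \<Rightarrow> ('a set \<Rightarrow> 'a)
    \<Rightarrow> real \<Rightarrow> real \<Rightarrow> nat \<Rightarrow> 'a list \<Rightarrow> 'a stateA \<Rightarrow> 'a stateA pmf" where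
  "phaseA_run f p Ms sel \<alpha> \<epsilon> d [] st = return_pmf st"
| "phaseA_run f p Ms sel \<alpha> \<epsilon> d (x # xs) st =
     bind_pmf (phaseA_step f p Ms sel \<alpha> \<epsilon> d x st) (phaseA_run f p Ms sel \<alpha> \<epsilon> d xs)"

text \<open>Phase A on the stream \<open>xs\<close>, from \<open>I = {}\<close>, \<open>C = {}\<close>, no weights assigned (0).
  Outcome: (S_1, C, weights).\<close>
definition phaseA :: "('a set \<Rightarrow> real) \<Rightarrow> nat \<Rightarrow> (nat \<Rightarrow> 'a set \<Rightarrow> bool) \<Rightarrow> ('a set \<Rightarrow> 'a)
    \<Rightarrow> real \<Rightarrow> real \<Rightarrow> nat \<Rightarrow> 'a list \<Rightarrow> 'a stateA pmf" where
  "phaseA f p Ms sel \<alpha> \<epsilon> d xs = phaseA_run f p Ms sel \<alpha> \<epsilon> d xs ({}, {}, (\<lambda>_. 0))"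

fun phaseB_run :: "('a set \<Rightarrow> real) \<Rightarrow> nat \<Rightarrow> (nat \<Rightarrow> 'a set \<Rightarrow> bool) \<Rightarrow> ('a set \<Rightarrow> 'a)
    \<Rightarrow> real \<Rightarrow> 'a list \<Rightarrow> 'a set \<times> ('a \<Rightarrow> real) \<Rightarrow> 'a set \<times> ('a \<Rightarrow> real)" where
  "phaseB_run f p Ms sel \<alpha> [] st = st"
| "phaseB_run f p Ms sel \<alpha> (v # vs) (I, w) =
     (let w' = w(v := marg f v I) in
      case Exchange p Ms sel w' v I of
        None \<Rightarrow> phaseB_run f p Ms sel \<alpha> vs (I, w')
      | Some S \<Rightarrow>
          (if w' v \<ge> (1 + \<alpha>) * sum w' S
           then phaseB_run f p Ms sel \<alpha> vs ((I \<union> {v}) - S, w')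
           else phaseB_run f p Ms sel \<alpha> vs (I, w')))"

definition phaseB :: "('a set \<Rightarrow> real) \<Rightarrow> nat \<Rightarrow> (nat \<Rightarrow> 'a set \<Rightarrow> bool) \<Rightarrow> ('a set \<Rightarrow> 'a)
    \<Rightarrow> real \<Rightarrow> 'a list \<Rightarrow> 'a set \<Rightarrow> 'a stateA \<Rightarrow> 'a set \<times> ('a \<Rightarrow> real)" where
  "phaseB f p Ms sel \<alpha> xs D st = (case st of (S1, C, w) \<Rightarrow>
     phaseB_run f p Ms sel \<alpha> (filter (\<lambda>v. v \<in> C - D) xs) (S1, w))"

end

theory Submission imports Defs begin

text \<open>Two facts about Phase A drive the proof. First, an item enters the solution only if its new
  weight \<open>f(v|I)\<close> is at least \<open>(1 + \<alpha>)\<close> times the weight it evicts, so the total weight ever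
  assigned stays within a factor \<open>1 + 1/\<alpha>\<close> of the weight of the current solution. Second, the
  potential \<open>\<epsilon> w(V) - w(D)\<close> is a submartingale: the item is drawn with probability proportional
  to \<open>1 / f(v|I)\<close>, so the expected increment is a positive multiple of \<open>\<epsilon> |C| - |C \<inter> D|\<close>,
  which is non-negative since \<open>|C| \<ge> d/\<epsilon>\<close>. Phase B never lowers the weight of the solution and
  never reweights items of \<open>S\<^sub>1\<close>, and every deleted item of \<open>S\<^sub>2\<close> lies in \<open>S\<^sub>1\<close>; hence
  \<open>w(S\<^sub>2 \<inter> D) \<le> w(D) \<le> \<epsilon> (1 + 1/\<alpha>) w(S\<^sub>2) - potential\<close>, and taking expectations finishes the proof.\<close>

lemma sum_fun_upd:
  fixes w :: "'a \<Rightarrow> real"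
  assumes "finite A"
  shows "sum (w(x := c)) A = sum w A + (if x \<in> A then c - w x else 0)"
proof (cases "x \<in> A")
  case True
  have "sum (w(x := c)) A = c + sum (w(x := c)) (A - {x})"
    using sum.remove[OF assms True, of "w(x := c)"] by simp
  also have "sum (w(x := c)) (A - {x}) = sum w (A - {x})" by (rule sum.cong) auto
  also have "\<dots> = sum w A - w x" using assms True by (simp add: sum_diff1)
  finally show ?thesis using True by simp
next
  case False
  then show ?thesis by (auto intro: sum.cong)
qed

lemma sum_exchange:
  fixes w :: "'a \<Rightarrow> real"
  assumes "finite I" "S \<subseteq> I" "v \<notin> I"
  shows "sum (w(v := c)) (insert v I - S) = c + sum w I - sum w S"
proof -
  have "insert v I - S = insert v (I - S)" using assms(2,3) by auto
  then have "sum (w(v := c)) (insert v I - S) = sum w (insert v (I - S)) + c - w v"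
    using sum_fun_upd[of "insert v (I - S)" w v c] assms(1) by simp
  then show ?thesis using assms by (simp add: sum_diff)
qed

lemma exchange_threshold:
  fixes \<alpha> g s :: real
  assumes "\<alpha> > 0" "s \<ge> 0" "g \<ge> (1 + \<alpha>) * s"
  shows "s \<le> g" and "g \<le> (1 + 1 / \<alpha>) * (g - s)"
proof -
  have "(1 + \<alpha>) * s = s + \<alpha> * s" by (simp add: distrib_right)
  moreover have "\<alpha> * s \<ge> 0" using assms(1,2) by simp
  ultimately show "s \<le> g" using assms(3) by linarith
  have "(1 + 1 / \<alpha>) * (g - s) - g = (g - (1 + \<alpha>) * s) / \<alpha>"
    using assms(1) by (simp add: field_simps)
  moreover have "(g - (1 + \<alpha>) * s) / \<alpha> \<ge> 0" using assms by simp
  ultimately show "g \<le> (1 + 1 / \<alpha>) * (g - s)" by linarith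
qed

lemma expectation_mono_finite:
  fixes F G :: "'b \<Rightarrow> real"
  assumes "finite (set_pmf M)" "\<And>x. x \<in> set_pmf M \<Longrightarrow> F x \<le> G x"
  shows "measure_pmf.expectation M F \<le> measure_pmf.expectation M G"
  using assms by (intro integral_mono_AE integrable_measure_pmf_finite) (auto simp: AE_measure_pmf_iff)

lemma expectation_bind_pmf_finite:
  fixes F :: "'b \<Rightarrow> real"
  assumes "finite (set_pmf M)" "\<And>x. x \<in> set_pmf M \<Longrightarrow> finite (set_pmf (N x))"
  shows "measure_pmf.expectation (bind_pmf M N) F
       = measure_pmf.expectation M (\<lambda>x. measure_pmf.expectation (N x) F)"
proof -
  let ?A = "set_pmf M"
  let ?B = "\<Union>x\<in>?A. set_pmf (N x)"
  have fB: "finite ?B" using assms by auto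
  have pmf_bind_sum: "pmf (bind_pmf M N) b = (\<Sum>a\<in>?A. pmf (N a) b * pmf M a)" for b
    unfolding pmf_bind by (rule integral_measure_pmf_real) (use assms in auto)
  have expectation_N: "measure_pmf.expectation (N a) F = (\<Sum>b\<in>?B. F b * pmf (N a) b)" if "a \<in> ?A" for a
    by (rule integral_measure_pmf_real) (use fB that in auto)
  have "measure_pmf.expectation (bind_pmf M N) F = (\<Sum>b\<in>?B. F b * pmf (bind_pmf M N) b)"
    by (rule integral_measure_pmf_real) (use fB in auto)
  also have "\<dots> = (\<Sum>b\<in>?B. \<Sum>a\<in>?A. F b * pmf (N a) b * pmf M a)"
    by (simp add: pmf_bind_sum sum_distrib_left mult.assoc)
  also have "\<dots> = (\<Sum>a\<in>?A. \<Sum>b\<in>?B. F b * pmf (N a) b * pmf M a)"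
    by (rule sum.swap)
  also have "\<dots> = (\<Sum>a\<in>?A. measure_pmf.expectation (N a) F * pmf M a)"
    by (intro sum.cong refl) (use expectation_N in \<open>simp add: sum_distrib_right\<close>)
  also have "\<dots> = measure_pmf.expectation M (\<lambda>x. measure_pmf.expectation (N x) F)"
    by (rule integral_measure_pmf_real[symmetric]) (use assms in auto)
  finally show ?thesis .
qed

lemma set_pmf_sample_pmf_zeros:
  assumes "finite C" "{v \<in> C. g v = 0} \<noteq> {}"
  shows "set_pmf (sample_pmf g C) = {v \<in> C. g v = 0}"
  using assms by (simp add: sample_pmf_def)

lemma
  fixes g :: "'a \<Rightarrow> real"
  assumes "finite C" "C \<noteq> {}" "\<forall>v\<in>C. g v > 0"
  shows pmf_sample_pmf_pos: "pmf (sample_pmf g C) x = (if x \<in> C then (1 / g x) / (\<Sum>u\<in>C. 1 / g u) else 0)"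
    and set_pmf_sample_pmf_pos: "set_pmf (sample_pmf g C) \<subseteq> C"
proof -
  let ?F = "\<lambda>v. if v \<in> C then (1 / g v) / (\<Sum>u\<in>C. 1 / g u) else 0"
  have total_pos: "(\<Sum>u\<in>C. 1 / g u) > 0" using assms by (intro sum_pos) auto
  have nonneg: "0 \<le> ?F x" for x using assms(3) total_pos by auto
  have "(\<integral>\<^sup>+x. ennreal (?F x) \<partial>count_space UNIV) = ennreal (\<Sum>x\<in>C. ?F x)"
    using assms(1) nonneg by (subst nn_integral_count_space') (auto intro: sum_ennreal)
  also have "(\<Sum>x\<in>C. ?F x) = (\<Sum>x\<in>C. (1 / g x) / (\<Sum>u\<in>C. 1 / g u))"
    by (rule sum.cong) auto
  also have "\<dots> = (\<Sum>x\<in>C. 1 / g x) / (\<Sum>u\<in>C. 1 / g u)"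
    by (rule sum_divide_distrib[symmetric])
  also have "\<dots> = 1"
    using total_pos by simp
  finally have total: "(\<integral>\<^sup>+x. ennreal (?F x) \<partial>count_space UNIV) = 1" by simp
  have eq: "sample_pmf g C = embed_pmf ?F" using assms(3) by (auto simp: sample_pmf_def)
  show "pmf (sample_pmf g C) x = ?F x" unfolding eq by (rule pmf_embed_pmf[OF nonneg total])
  show "set_pmf (sample_pmf g C) \<subseteq> C" unfolding eq set_embed_pmf[OF nonneg total] by auto
qed

lemma set_pmf_sample_pmf:
  fixes g :: "'a \<Rightarrow> real"
  assumes "finite C" "C \<noteq> {}" "\<forall>v\<in>C. g v \<ge> 0"
  shows "set_pmf (sample_pmf g C) \<subseteq> C"
proof (cases "{v \<in> C. g v = 0} = {}")
  case True
  then show ?thesis using assms by (intro set_pmf_sample_pmf_pos) force+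
qed (use assms set_pmf_sample_pmf_zeros in auto)

text \<open>Sampling proportionally to \<open>1 / g\<close> turns \<open>E[g v \<cdot> h v]\<close> into a positive multiple of the plain
  sum of \<open>h\<close> over \<open>C\<close>. Items with \<open>g v = 0\<close> contribute nothing, which is why the degenerate
  sampling rule of \<open>sample_pmf\<close> is harmless here.\<close>
lemma expectation_sample_pmf_deletion_nonneg:
  fixes g :: "'a \<Rightarrow> real" and \<epsilon> :: real
  assumes "finite C" "C \<noteq> {}" "\<forall>v\<in>C. g v \<ge> 0" "real (card (C \<inter> D)) \<le> \<epsilon> * card C"
  shows "measure_pmf.expectation (sample_pmf g C) (\<lambda>v. (\<epsilon> - indicator D v) * g v) \<ge> 0"
proof (cases "{v \<in> C. g v = 0} = {}")
  case False
  have "measure_pmf.expectation (sample_pmf g C) (\<lambda>v. (\<epsilon> - indicator D v) * g v)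
      = (\<Sum>v\<in>{v \<in> C. g v = 0}. (\<epsilon> - indicator D v) * g v * pmf (sample_pmf g C) v)"
    by (rule integral_measure_pmf_real) (use assms(1) set_pmf_sample_pmf_zeros[OF assms(1) False] in auto)
  then show ?thesis by simp
next
  case True
  have pos: "\<forall>v\<in>C. g v > 0" using True assms(3) by force
  define total where "total = (\<Sum>u\<in>C. 1 / g u)"
  have total_pos: "total > 0" unfolding total_def using pos assms(1,2) by (intro sum_pos) auto
  have "measure_pmf.expectation (sample_pmf g C) (\<lambda>v. (\<epsilon> - indicator D v) * g v)
      = (\<Sum>v\<in>C. (\<epsilon> - indicator D v) * g v * pmf (sample_pmf g C) v)"
    by (rule integral_measure_pmf_real) (use assms(1) set_pmf_sample_pmf_pos[OF assms(1,2) pos] in auto)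
  also have "\<dots> = (\<Sum>v\<in>C. (\<epsilon> - indicator D v) / total)"
    using pos by (intro sum.cong) (auto simp: pmf_sample_pmf_pos[OF assms(1,2) pos] total_def)
  also have "\<dots> = (\<epsilon> * card C - card (C \<inter> D)) / total"
    using assms(1) by (simp add: sum_divide_distrib[symmetric] sum_subtractf sum.inter_restrict indicator_def)
  also have "\<dots> \<ge> 0" using total_pos assms(4) by simp
  finally show ?thesis .
qed

lemma Exchange_subset:
  assumes "\<forall>A. A \<noteq> {} \<longrightarrow> sel A \<in> A" "Exchange p Ms sel w v I = Some S"
  shows "S \<subseteq> I"
proof
  let ?J = "{j. j < p \<and> \<not> Ms j (insert v I)}"
  from assms(2) have nonempty: "\<forall>j\<in>?J. exch_cands Ms j w v I \<noteq> {}"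
    and S: "S = (\<lambda>j. sel (exch_cands Ms j w v I)) ` ?J"
    unfolding Exchange_def Let_def by (auto split: if_splits)
  fix u assume "u \<in> S"
  then obtain j where "j \<in> ?J" "u = sel (exch_cands Ms j w v I)" using S by blast
  then have "u \<in> exch_cands Ms j w v I" using nonempty assms(1) by auto
  then show "u \<in> I" unfolding exch_cands_def by auto
qed

lemma marg_nonneg:
  assumes "monotone_set_fun V f" "insert v I \<subseteq> V"
  shows "marg f v I \<ge> 0"
  using assms unfolding monotone_set_fun_def marg_def by (metis diff_ge_0_iff_ge subset_insertI)

lemma phaseB_run_Cons_step:
  assumes sel: "\<forall>A. A \<noteq> {} \<longrightarrow> sel A \<in> A" and "\<alpha> > 0"
    and "finite I" "v \<notin> I" "\<forall>u. w u \<ge> 0"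
  obtains I' where "phaseB_run f p Ms sel \<alpha> (v # vs) (I, w) = phaseB_run f p Ms sel \<alpha> vs (I', w(v := marg f v I))"
    and "I' \<subseteq> insert v I" and "sum w I \<le> sum (w(v := marg f v I)) I'"
proof -
  let ?w' = "w(v := marg f v I)"
  let ?run = "phaseB_run f p Ms sel \<alpha>"
  have sum_I: "sum ?w' I = sum w I" by (rule sum.cong) (use \<open>v \<notin> I\<close> in auto)
  show thesis
  proof (cases "Exchange p Ms sel ?w' v I")
    case None
    then have "?run (v # vs) (I, w) = ?run vs (I, ?w')" by (simp add: Let_def)
    then show thesis using sum_I by (intro that) auto
  next
    case (Some S)
    have "S \<subseteq> I" by (rule Exchange_subset[OF sel Some])
    show thesis
    proof (cases "?w' v \<ge> (1 + \<alpha>) * sum ?w' S")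
      case False
      then have "?run (v # vs) (I, w) = ?run vs (I, ?w')" using Some by (simp add: Let_def)
      then show thesis using sum_I by (intro that) auto
    next
      case True
      then have run: "?run (v # vs) (I, w) = ?run vs (insert v I - S, ?w')" using Some by (simp add: Let_def)
      have "sum ?w' S \<ge> 0"
        by (rule sum_nonneg) (use \<open>\<forall>u. w u \<ge> 0\<close> \<open>v \<notin> I\<close> \<open>S \<subseteq> I\<close> in auto)
      then have "sum ?w' S \<le> ?w' v" by (rule exchange_threshold(1)[OF \<open>\<alpha> > 0\<close> _ True])
      moreover have "?w' v = marg f v I" by simp
      moreover have "sum ?w' (insert v I - S) = marg f v I + sum w I - sum w S"
        by (rule sum_exchange[OF \<open>finite I\<close> \<open>S \<subseteq> I\<close> \<open>v \<notin> I\<close>])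
      moreover have "sum ?w' S = sum w S" using \<open>v \<notin> I\<close> \<open>S \<subseteq> I\<close> by (intro sum.cong) auto
      ultimately have "sum w I \<le> sum ?w' (insert v I - S)" by linarith
      with run show thesis by (intro that) auto
    qed
  qed
qed

lemma phaseB_run_invariants:
  assumes mono: "monotone_set_fun V f" and sel: "\<forall>A. A \<noteq> {} \<longrightarrow> sel A \<in> A" and "\<alpha> > 0"
    and "finite V"
  shows "distinct vs \<Longrightarrow> set vs \<inter> I = {} \<Longrightarrow> I \<union> set vs \<subseteq> V \<Longrightarrow> \<forall>u. w u \<ge> 0 \<Longrightarrow>
    phaseB_run f p Ms sel \<alpha> vs (I, w) = (I2, w2) \<Longrightarrow>
    I2 \<subseteq> I \<union> set vs \<and> (\<forall>u. u \<notin> set vs \<longrightarrow> w2 u = w u) \<and> sum w I \<le> sum w2 I2 \<and> (\<forall>u. w2 u \<ge> 0)"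
proof (induction vs arbitrary: I w)
  case (Cons v vs)
  let ?w' = "w(v := marg f v I)"
  have "finite I" using Cons.prems(3) \<open>finite V\<close> finite_subset by blast
  have v_notin_I: "v \<notin> I" using Cons.prems(2) by auto
  obtain I' where run: "phaseB_run f p Ms sel \<alpha> (v # vs) (I, w) = phaseB_run f p Ms sel \<alpha> vs (I', ?w')"
    and "I' \<subseteq> insert v I" and gain: "sum w I \<le> sum ?w' I'"
    by (rule phaseB_run_Cons_step[OF sel \<open>\<alpha> > 0\<close> \<open>finite I\<close> v_notin_I \<open>\<forall>u. w u \<ge> 0\<close>])
  have "marg f v I \<ge> 0" by (rule marg_nonneg[OF mono]) (use Cons.prems in auto)
  have "I2 \<subseteq> I' \<union> set vs \<and> (\<forall>u. u \<notin> set vs \<longrightarrow> w2 u = ?w' u) \<and> sum ?w' I' \<le> sum w2 I2 \<and> (\<forall>u. w2 u \<ge> 0)"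
  proof (rule Cons.IH)
    show "phaseB_run f p Ms sel \<alpha> vs (I', ?w') = (I2, w2)" using Cons.prems(5) run by simp
  qed (use Cons.prems \<open>I' \<subseteq> insert v I\<close> \<open>marg f v I \<ge> 0\<close> in auto)
  then show ?case using gain \<open>I' \<subseteq> insert v I\<close> by auto
qed simp

text \<open>\<open>ys\<close> is the part of the stream not yet read. The last conjunct is the charging bound: the
  total weight handed out so far is at most \<open>1 + 1/\<alpha>\<close> times the weight of the current solution.\<close>
definition phaseA_inv :: "'a list \<Rightarrow> real \<Rightarrow> 'a list \<Rightarrow> 'a stateA \<Rightarrow> bool" where
  "phaseA_inv xs \<alpha> ys st \<longleftrightarrow> (case st of (I, C, w) \<Rightarrow>
     set ys \<subseteq> set xs \<and> distinct ys \<and> I \<subseteq> set xs \<and> C \<subseteq> set xs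
     \<and> I \<inter> C = {} \<and> I \<inter> set ys = {} \<and> C \<inter> set ys = {} \<and> (\<forall>v\<in>C \<union> set ys. w v = 0)
     \<and> (\<forall>v. w v \<ge> 0) \<and> sum w (set xs) \<le> (1 + 1 / \<alpha>) * sum w I)"

definition deletion_potential :: "'a list \<Rightarrow> real \<Rightarrow> 'a set \<Rightarrow> 'a stateA \<Rightarrow> real" where
  "deletion_potential xs \<epsilon> D st = (case st of (I, C, w) \<Rightarrow> \<epsilon> * sum w (set xs) - sum w D)"

lemma deletion_potential_fun_upd:
  assumes "w v = 0" "v \<in> set xs" "finite D"
  shows "deletion_potential xs \<epsilon> D (I', C', w(v := c))
       = deletion_potential xs \<epsilon> D (I, C, w) + (\<epsilon> - indicator D v) * c"
proof -
  have "sum (w(v := c)) (set xs) = sum w (set xs) + c"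
    using sum_fun_upd[of "set xs" w v c] assms by simp
  moreover have "sum (w(v := c)) D = sum w D + indicator D v * c"
    using sum_fun_upd[of D w v c] assms by (simp add: indicator_def)
  ultimately show ?thesis by (simp add: deletion_potential_def algebra_simps)
qed

lemma phaseA_inv_exchange:
  assumes mono: "monotone_set_fun (set xs) f" and sel: "\<forall>A. A \<noteq> {} \<longrightarrow> sel A \<in> A" and "\<alpha> > 0"
    and inv: "phaseA_inv xs \<alpha> (y # ys) (I, C, w)"
    and "C' \<subseteq> insert y C" "v \<in> C'" and keep: "keep f p Ms sel \<alpha> w I v"
  shows "phaseA_inv xs \<alpha> ys ((I \<union> {v}) - the (Exchange p Ms sel w v I), C' - {v}, w(v := marg f v I))"
proof -
  let ?g = "marg f v I"
  obtain S where S: "Exchange p Ms sel w v I = Some S" and threshold: "?g \<ge> (1 + \<alpha>) * sum w S"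
    using keep unfolding keep_def by (auto split: option.splits)
  have "S \<subseteq> I" by (rule Exchange_subset[OF sel S])
  have I: "set (y # ys) \<subseteq> set xs" "distinct (y # ys)" "I \<subseteq> set xs" "C \<subseteq> set xs"
     "I \<inter> C = {}" "I \<inter> set (y # ys) = {}" "C \<inter> set (y # ys) = {}" "\<forall>v\<in>C \<union> set (y # ys). w v = 0"
     "\<forall>v. w v \<ge> 0" "sum w (set xs) \<le> (1 + 1 / \<alpha>) * sum w I"
    using inv unfolding phaseA_inv_def by auto
  have "v \<in> set xs" "v \<notin> I" "w v = 0" using I \<open>C' \<subseteq> insert y C\<close> \<open>v \<in> C'\<close> by auto
  have "finite I" using I(3) finite_subset by blast
  have "?g \<ge> 0" by (rule marg_nonneg[OF mono]) (use I(3) \<open>v \<in> set xs\<close> in auto)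
  have "sum (w(v := ?g)) (set xs) = sum w (set xs) + ?g"
    using \<open>v \<in> set xs\<close> \<open>w v = 0\<close> sum_fun_upd[of "set xs" w v ?g] by simp
  also have "\<dots> \<le> (1 + 1 / \<alpha>) * sum w I + (1 + 1 / \<alpha>) * (?g - sum w S)"
  proof -
    have "sum w S \<ge> 0" using I(9) by (simp add: sum_nonneg)
    then have "?g \<le> (1 + 1 / \<alpha>) * (?g - sum w S)" by (rule exchange_threshold(2)[OF \<open>\<alpha> > 0\<close> _ threshold])
    then show ?thesis using I(10) by linarith
  qed
  also have "\<dots> = (1 + 1 / \<alpha>) * sum (w(v := ?g)) (insert v I - S)"
    unfolding sum_exchange[OF \<open>finite I\<close> \<open>S \<subseteq> I\<close> \<open>v \<notin> I\<close>] by (simp add: algebra_simps)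
  finally show ?thesis
    using I \<open>C' \<subseteq> insert y C\<close> \<open>v \<in> C'\<close> \<open>S \<subseteq> I\<close> \<open>?g \<ge> 0\<close>
    unfolding phaseA_inv_def S by auto
qed

lemma phaseA_step_submartingale:
  fixes p :: nat and Ms :: "nat \<Rightarrow> 'a set \<Rightarrow> bool"
  assumes mono: "monotone_set_fun (set xs) f" and sel: "\<forall>A. A \<noteq> {} \<longrightarrow> sel A \<in> A"
    and "\<alpha> > 0" "\<epsilon> > 0" "D \<subseteq> set xs" "card D \<le> d"
    and inv: "phaseA_inv xs \<alpha> (y # ys) st"
  defines "M \<equiv> phaseA_step f p Ms sel \<alpha> \<epsilon> d y st"
  shows "finite (set_pmf M) \<and> (\<forall>s\<in>set_pmf M. phaseA_inv xs \<alpha> ys s)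
    \<and> deletion_potential xs \<epsilon> D st \<le> measure_pmf.expectation M (deletion_potential xs \<epsilon> D)"
proof -
  obtain I C w where st: "st = (I, C, w)" by (cases st)
  define C' where "C' = {v \<in> insert y C. keep f p Ms sel \<alpha> w I v}"
  define g where "g = (\<lambda>v. marg f v I)"
  define h where "h = (\<lambda>v. ((I \<union> {v}) - the (Exchange p Ms sel w v I), C' - {v}, w(v := g v)))"
  let ?Q = "deletion_potential xs \<epsilon> D"
  have "C' \<subseteq> insert y C" unfolding C'_def by auto
  have I: "y \<in> set xs" "C \<subseteq> set xs" "I \<subseteq> set xs" "\<forall>v\<in>insert y C. w v = 0"
    using inv unfolding st phaseA_inv_def by auto
  have "C' \<subseteq> set xs" using I \<open>C' \<subseteq> insert y C\<close> by auto
  then have "finite C'" using finite_subset by blast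
  have "finite D" using \<open>D \<subseteq> set xs\<close> finite_subset by blast
  have g_nonneg: "\<forall>v\<in>C'. g v \<ge> 0"
    unfolding g_def using \<open>C' \<subseteq> set xs\<close> I(3) by (auto intro!: marg_nonneg[OF mono])
  show ?thesis
  proof (cases "C' \<noteq> {} \<and> real (card C') \<ge> real d / \<epsilon>")
    case False
    then have "M = return_pmf (I, C', w)"
      unfolding M_def st phaseA_step_def Let_def prod.case C'_def[symmetric] by auto
    moreover have "phaseA_inv xs \<alpha> ys (I, C', w)"
      using inv \<open>C' \<subseteq> insert y C\<close> unfolding st phaseA_inv_def by auto
    ultimately show ?thesis by (simp add: st deletion_potential_def)
  next
    case True
    then have M: "M = map_pmf h (sample_pmf g C')"
      unfolding M_def st phaseA_step_def Let_def prod.case C'_def[symmetric] by (simp add: h_def g_def)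
    have support: "set_pmf (sample_pmf g C') \<subseteq> C'"
      using set_pmf_sample_pmf[OF \<open>finite C'\<close> _ g_nonneg] True by blast
    then have "finite (set_pmf (sample_pmf g C'))" using \<open>finite C'\<close> finite_subset by blast
    have inv_h: "phaseA_inv xs \<alpha> ys (h v)" if "v \<in> C'" for v
      unfolding h_def g_def
      using phaseA_inv_exchange[OF mono sel \<open>\<alpha> > 0\<close> inv[unfolded st] \<open>C' \<subseteq> insert y C\<close> that]
        that by (simp add: C'_def)
    have potential_h: "?Q (h v) = ?Q st + (\<epsilon> - indicator D v) * g v" if "v \<in> C'" for v
      unfolding h_def st using that I \<open>C' \<subseteq> insert y C\<close> \<open>C' \<subseteq> set xs\<close> \<open>finite D\<close>
      by (intro deletion_potential_fun_upd) auto
    have "card (C' \<inter> D) \<le> d" using card_mono[OF \<open>finite D\<close>, of "C' \<inter> D"] \<open>card D \<le> d\<close> by auto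
    also have "real d \<le> \<epsilon> * card C'" using True \<open>\<epsilon> > 0\<close> by (simp add: field_simps)
    finally have "0 \<le> measure_pmf.expectation (sample_pmf g C') (\<lambda>v. (\<epsilon> - indicator D v) * g v)"
      using True by (intro expectation_sample_pmf_deletion_nonneg[OF \<open>finite C'\<close> _ g_nonneg]) auto
    also have "?Q st + \<dots> = measure_pmf.expectation (sample_pmf g C') (\<lambda>v. ?Q st + (\<epsilon> - indicator D v) * g v)"
      using \<open>finite (set_pmf (sample_pmf g C'))\<close> by (simp add: integrable_measure_pmf_finite)
    also have "\<dots> = measure_pmf.expectation (sample_pmf g C') (\<lambda>v. ?Q (h v))"
      using support by (intro integral_cong_AE) (auto simp: AE_measure_pmf_iff potential_h)
    also have "\<dots> = measure_pmf.expectation M ?Q"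
      unfolding M by simp
    finally show ?thesis
      using support inv_h \<open>finite (set_pmf (sample_pmf g C'))\<close> unfolding M by auto
  qed
qed

lemma phaseA_run_submartingale:
  assumes mono: "monotone_set_fun (set xs) f" and sel: "\<forall>A. A \<noteq> {} \<longrightarrow> sel A \<in> A"
    and "\<alpha> > 0" "\<epsilon> > 0" "D \<subseteq> set xs" "card D \<le> d"
  shows "phaseA_inv xs \<alpha> ys st \<Longrightarrow>
    finite (set_pmf (phaseA_run f p Ms sel \<alpha> \<epsilon> d ys st))
    \<and> (\<forall>s\<in>set_pmf (phaseA_run f p Ms sel \<alpha> \<epsilon> d ys st). phaseA_inv xs \<alpha> [] s)
    \<and> deletion_potential xs \<epsilon> D st
      \<le> measure_pmf.expectation (phaseA_run f p Ms sel \<alpha> \<epsilon> d ys st) (deletion_potential xs \<epsilon> D)"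
proof (induction ys arbitrary: st)
  case (Cons y ys)
  let ?M = "phaseA_step f p Ms sel \<alpha> \<epsilon> d y st"
  let ?N = "phaseA_run f p Ms sel \<alpha> \<epsilon> d ys"
  let ?Q = "deletion_potential xs \<epsilon> D"
  have step: "finite (set_pmf ?M) \<and> (\<forall>s\<in>set_pmf ?M. phaseA_inv xs \<alpha> ys s)
      \<and> ?Q st \<le> measure_pmf.expectation ?M ?Q"
    using phaseA_step_submartingale[OF assms Cons.prems] by simp
  have IH: "finite (set_pmf (?N s)) \<and> (\<forall>s'\<in>set_pmf (?N s). phaseA_inv xs \<alpha> [] s')
      \<and> ?Q s \<le> measure_pmf.expectation (?N s) ?Q" if "s \<in> set_pmf ?M" for s
    by (rule Cons.IH) (use step that in blast)
  have "?Q st \<le> measure_pmf.expectation ?M ?Q" using step by blast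
  also have "\<dots> \<le> measure_pmf.expectation ?M (\<lambda>s. measure_pmf.expectation (?N s) ?Q)"
    using step IH by (intro expectation_mono_finite) auto
  also have "\<dots> = measure_pmf.expectation (bind_pmf ?M ?N) ?Q"
    using step IH by (intro expectation_bind_pmf_finite[symmetric]) auto
  finally show ?case using step IH by auto
qed simp

lemma phaseB_weight_after_deletion:
  assumes mono: "monotone_set_fun (set xs) f" and sel: "\<forall>A. A \<noteq> {} \<longrightarrow> sel A \<in> A"
    and "\<alpha> > 0" "\<epsilon> > 0" "D \<subseteq> set xs" "distinct xs"
    and inv: "phaseA_inv xs \<alpha> [] (S1, C, w)"
    and B: "phaseB f p Ms sel \<alpha> xs D (S1, C, w) = (S2, w2)"
  shows "sum w2 (S2 - D) \<ge> (1 - (1 + 1 / \<alpha>) * \<epsilon>) * sum w2 S2 + deletion_potential xs \<epsilon> D (S1, C, w)"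
proof -
  have I: "S1 \<subseteq> set xs" "C \<subseteq> set xs" "S1 \<inter> C = {}" "\<forall>v. w v \<ge> 0"
    "sum w (set xs) \<le> (1 + 1 / \<alpha>) * sum w S1"
    using inv unfolding phaseA_inv_def by auto
  define vs where "vs = filter (\<lambda>v. v \<in> C - D) xs"
  have "set vs = C - D" unfolding vs_def using I(2) by auto
  have "distinct vs" unfolding vs_def using \<open>distinct xs\<close> by simp
  have run: "phaseB_run f p Ms sel \<alpha> vs (S1, w) = (S2, w2)" using B unfolding phaseB_def vs_def by simp
  have "S2 \<subseteq> S1 \<union> set vs \<and> (\<forall>u. u \<notin> set vs \<longrightarrow> w2 u = w u) \<and> sum w S1 \<le> sum w2 S2 \<and> (\<forall>u. w2 u \<ge> 0)"
    by (rule phaseB_run_invariants[OF mono sel \<open>\<alpha> > 0\<close> List.finite_set \<open>distinct vs\<close> _ _ _ run])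
      (use I \<open>set vs = C - D\<close> in auto)
  then have B_props: "S2 \<subseteq> S1 \<union> set vs" "\<forall>u. u \<notin> set vs \<longrightarrow> w2 u = w u" "sum w S1 \<le> sum w2 S2"
    by auto
  have "S2 \<subseteq> set xs" using B_props(1) I(1,2) \<open>set vs = C - D\<close> by auto
  then have "finite S2" by (rule finite_subset) simp
  have "finite D" using \<open>D \<subseteq> set xs\<close> finite_subset by blast
  txt \<open>Deleted items of \<open>S\<^sub>2\<close> were already in \<open>S\<^sub>1\<close>, so they kept their Phase A weights.\<close>
  have "sum w2 (S2 \<inter> D) = sum w (S2 \<inter> D)"
    using B_props \<open>set vs = C - D\<close> by (intro sum.cong) auto
  also have "\<dots> \<le> sum w D" using \<open>finite D\<close> I(4) by (intro sum_mono2) auto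
  finally have "sum w2 (S2 \<inter> D) \<le> sum w D" .
  moreover have "sum w2 S2 = sum w2 (S2 \<inter> D) + sum w2 (S2 - D)"
    using \<open>finite S2\<close> by (rule sum.Int_Diff)
  moreover have "(1 + 1 / \<alpha>) * sum w S1 \<le> (1 + 1 / \<alpha>) * sum w2 S2"
    by (rule mult_left_mono) (use B_props(3) \<open>\<alpha> > 0\<close> in auto)
  then have "\<epsilon> * sum w (set xs) \<le> \<epsilon> * ((1 + 1 / \<alpha>) * sum w2 S2)"
    using I(5) \<open>\<epsilon> > 0\<close> by simp
  moreover have "(1 - (1 + 1 / \<alpha>) * \<epsilon>) * sum w2 S2 = sum w2 S2 - \<epsilon> * ((1 + 1 / \<alpha>) * sum w2 S2)"
    by (simp add: algebra_simps)
  moreover have "deletion_potential xs \<epsilon> D (S1, C, w) = \<epsilon> * sum w (set xs) - sum w D"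
    by (simp add: deletion_potential_def)
  ultimately show ?thesis by linarith
qed

theorem lemma1:
  fixes xs :: "'a list" and f :: "'a set \<Rightarrow> real" and p :: nat
    and Ms :: "nat \<Rightarrow> 'a set \<Rightarrow> bool" and sel :: "'a set \<Rightarrow> 'a"
    and \<alpha> \<epsilon> :: real and d :: nat and D :: "'a set"
  assumes "distinct xs"
    and "f {} = 0"
    and "\<forall>X. X \<subseteq> set xs \<longrightarrow> f X \<ge> 0"
    and "monotone_set_fun (set xs) f"
    and "submodular (set xs) f"
    and "p \<ge> 1"
    and "\<forall>j<p. matroid (set xs) (Ms j)"
    and "\<forall>A. A \<noteq> {} \<longrightarrow> sel A \<in> A"
    and "\<alpha> > 0" and "\<epsilon> > 0"
    and "D \<subseteq> set xs" and "card D \<le> d"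
  shows "measure_pmf.expectation (phaseA f p Ms sel \<alpha> \<epsilon> d xs)
            (\<lambda>st. case phaseB f p Ms sel \<alpha> xs D st of (S2, w) \<Rightarrow> sum w (S2 - D))
         \<ge> (1 - (1 + 1 / \<alpha>) * \<epsilon>) *
           measure_pmf.expectation (phaseA f p Ms sel \<alpha> \<epsilon> d xs)
            (\<lambda>st. case phaseB f p Ms sel \<alpha> xs D st of (S2, w) \<Rightarrow> sum w S2)"
proof -
  let ?M = "phaseA f p Ms sel \<alpha> \<epsilon> d xs"
  let ?Q = "deletion_potential xs \<epsilon> D"
  let ?c = "1 - (1 + 1 / \<alpha>) * \<epsilon>"
  let ?S2 = "\<lambda>st. case phaseB f p Ms sel \<alpha> xs D st of (S2, w) \<Rightarrow> sum w S2"
  let ?S2_D = "\<lambda>st. case phaseB f p Ms sel \<alpha> xs D st of (S2, w) \<Rightarrow> sum w (S2 - D)"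
  have "phaseA_inv xs \<alpha> xs ({}, {}, (\<lambda>_. 0))" using assms(1) unfolding phaseA_inv_def by auto
  from phaseA_run_submartingale[where p = p and Ms = Ms, OF assms(4,8,9,10,11,12) this]
  have A: "finite (set_pmf ?M)" "\<forall>s\<in>set_pmf ?M. phaseA_inv xs \<alpha> [] s"
    "?Q ({}, {}, (\<lambda>_. 0)) \<le> measure_pmf.expectation ?M ?Q"
    unfolding phaseA_def by auto
  have "?Q ({}, {}, (\<lambda>_. 0)) = 0" by (simp add: deletion_potential_def)
  have "?c * measure_pmf.expectation ?M ?S2 \<le> measure_pmf.expectation ?M (\<lambda>st. ?c * ?S2 st + ?Q st)"
    using A(1,3) \<open>?Q ({}, {}, (\<lambda>_. 0)) = 0\<close> by (simp add: integrable_measure_pmf_finite)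
  also have "\<dots> \<le> measure_pmf.expectation ?M ?S2_D"
    using A(1,2) phaseB_weight_after_deletion[OF assms(4,8,9,10,11,1)]
    by (intro expectation_mono_finite) (auto split: prod.split)
  finally show ?thesis .
qed

end
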